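(* In the setting of the context, the linear forms $Q^{(l)}$ and $\bar Q^{(l)}$ satisfy, for $l\ge1$, $$Q^{(l)}=\xi_1^{(l)}-(g_{l,0},\dots,g_{l,l-1})(g^{[l]})^{-1}\xi_1^{[l]}=\bar S_{l,l}\,(0,\dots,0,1)(g^{[l+1]})^{-1}\xi_1^{[l+1]}=\frac{1}{\det g^{[l]}}\det\begin{pmatrix}g_{0,0}&\cdots&g_{0,l-1}&\xi_1^{(0)}\\ \vdots&&\vdots&\vdots\\ g_{l,0}&\cdots&g_{l,l-1}&\xi_1^{(l)}\end{pmatrix},$$ and, for $l\ge0$, $$\bar Q^{(l)}=(\bar S_{l,l})^{-1}\Big(\xi_2^{(l)}-(\xi_2^{[l]})^\top(g^{[l]})^{-1}\begin{pmatrix}g_{0,l}\\ \vdots\\ g_{l-1,l}\end{pmatrix}\Big)=(\xi_2^{[l+1]})^\top(g^{[l+1]})^{-1}\begin{pmatrix}0\\ \vdots\\0\\1\end{pmatrix}=\frac{1}{\det g^{[l+1]}}\det\begin{pmatrix}g_{0,0}&\cdots&g_{0,l}\\ \vdots&&\vdots\\ g_{l-1,0}&\cdots&g_{l-1,l}\\ \xi_2^{(0)}&\cdots&\xi_2^{(l)}\end{pmatrix}.$$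
   Context: $\mu$ is a finite Borel measure on an interval $\Delta\subset\mathbb R$ with infinitely many support points, not changing sign; $w_{1,a}$ ($a=1,\dots,p_1$), $w_{2,b}$ ($b=1,\dots,p_2$) are real integrable functions on $\Delta$ not changing sign; compositions $\vec n_\ell\in\mathbb N^{p_\ell}$ fixed. Each $i\in\mathbb Z_+$ is uniquely $i=q|\vec n_\ell|+n_{\ell,1}+\dots+n_{\ell,a-1}+r$, $0\le r<n_{\ell,a}$; $a_\ell(i)=a$, $k_\ell(i)=qn_{\ell,a}+r$. $\xi_\ell(x)$ is the semi-infinite vector with $i$-th entry $\xi_\ell^{(i)}=w_{\ell,a_\ell(i)}(x)x^{k_\ell(i)}$, and $\xi_\ell^{[l]}$ is the vector of its first $l$ entries. $g=\int\xi_1\xi_2^\top d\mu$, $g^{[l]}=(g_{i,j})_{0\le i,j<l}$. The combination is assumed perfect (for all $\vec\nu_1,\vec\nu_2$ with $|\vec\nu_1|=|\vec\nu_2|+1$, nontrivial polynomials $A_a$, $\deg A_a\le\nu_{1,a}-1$, with $\int\sum_aA_aw_{1,a}w_{2,b}x^jd\mu=0$ for $j<\nu_{2,b}$, all $b$, have $\deg A_a=\nu_{1,a}-1$), so that all $\det g^{[l]}\ne0$ and $g=S^{-1}\bar S$ with $S$ unit lower triangular and $\bar S$ upper triangular invertible. $Q=S\xi_1$, $\bar Q=(\bar S^{-1})^\top\xi_2$. *)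

theory Defs
  imports "HOL-Analysis.Analysis" "HOL-Computational_Algebra.Polynomial"
          "Jordan_Normal_Form.Determinant"
begin

(* Compositions are lists of positive naturals; components are indexed 0..p-1
   (the paper's a = 1..p corresponds to a = 0..p-1 here). *)

definition composition :: "nat list \<Rightarrow> bool" where
  "composition ns \<longleftrightarrow> ns \<noteq> [] \<and> (\<forall>a<length ns. ns ! a > 0)"

(* i = q |n| + n_0 + ... + n_{a-1} + r, 0 \<le> r < n_a *)
definition comp_a :: "nat list \<Rightarrow> nat \<Rightarrow> nat" where
  "comp_a ns i = (LEAST a. i mod sum_list ns < sum_list (take (Suc a) ns))"

definition comp_k :: "nat list \<Rightarrow> nat \<Rightarrow> nat" where
  "comp_k ns i = (i div sum_list ns) * (ns ! comp_a ns i)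
                 + (i mod sum_list ns - sum_list (take (comp_a ns i) ns))"

definition xi :: "nat list \<Rightarrow> (nat \<Rightarrow> real \<Rightarrow> real) \<Rightarrow> nat \<Rightarrow> real \<Rightarrow> real" where
  "xi ns w i x = w (comp_a ns i) x * x ^ comp_k ns i"

abbreviation mv :: "real mat \<Rightarrow> real Matrix.vec \<Rightarrow> real Matrix.vec" where
  "mv A v \<equiv> Matrix.mult_mat_vec A v"

abbreviation sp :: "real Matrix.vec \<Rightarrow> real Matrix.vec \<Rightarrow> real" where
  "sp u v \<equiv> Matrix.scalar_prod u v"

definition msupport :: "real measure \<Rightarrow> real set" where
  "msupport M = {x. \<forall>e>0. emeasure M (ball x e) > 0}"

definition minv :: "real mat \<Rightarrow> real mat" where
  "minv A = (THE B. B \<in> carrier_mat (dim_row A) (dim_row A) \<and>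
                    A * B = 1\<^sub>m (dim_row A) \<and> B * A = 1\<^sub>m (dim_row A))"

definition trunc :: "(nat \<Rightarrow> nat \<Rightarrow> real) \<Rightarrow> nat \<Rightarrow> real mat" where
  "trunc g l = mat l l (\<lambda>(i,j). g i j)"

(* perfect combination (mu-dependent part; sign of mu irrelevant) *)
definition perfect :: "real measure \<Rightarrow> nat \<Rightarrow> (nat \<Rightarrow> real \<Rightarrow> real) \<Rightarrow> nat \<Rightarrow> (nat \<Rightarrow> real \<Rightarrow> real) \<Rightarrow> bool" where
  "perfect M p1 w1 p2 w2 \<longleftrightarrow>
    (\<forall>(\<nu>1::nat \<Rightarrow> nat) (\<nu>2::nat \<Rightarrow> nat) (A::nat \<Rightarrow> real poly).
       (\<Sum>a<p1. \<nu>1 a) = (\<Sum>b<p2. \<nu>2 b) + 1 \<longrightarrow>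
       (\<forall>a<p1. \<forall>i\<ge>\<nu>1 a. coeff (A a) i = 0) \<longrightarrow>
       (\<exists>a<p1. A a \<noteq> 0) \<longrightarrow>
       (\<forall>b<p2. \<forall>j<\<nu>2 b.
          (\<integral>x. (\<Sum>a<p1. poly (A a) x * w1 a x) * w2 b x * x ^ j \<partial>M) = 0) \<longrightarrow>
       (\<forall>a<p1. \<nu>1 a \<ge> 1 \<longrightarrow> coeff (A a) (\<nu>1 a - 1) \<noteq> 0))"

end

theory Submission
  imports Defs
begin

(* Everything is read off the factorisation g = S^-1 Sb.  As S is unit lower triangular,
   every leading block factors in the same way, so inv g^[n] = Sbinv^[n] S^[n] and
   det g^[n] = prod_{i<n} Sb i i.  Row l of S g = Sb vanishes left of the diagonal, which
   expresses row l of g through the earlier rows and yields the Schur complement form of Q;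
   dually, column l of g Sbinv = S^-1 vanishes above the diagonal.  For the determinant
   forms, multiplying the bordered matrix by unit triangular matrices (and by Sbinv) makes
   it triangular with Q^(l), resp. Qbar^(l), as its last diagonal entry. *)

lemma sum_eq_sum_atMost_if_zero_above:
  fixes h :: "nat \<Rightarrow> 'a::comm_monoid_add"
  assumes "i < n" and "\<And>k. i < k \<Longrightarrow> h k = 0"
  shows "(\<Sum>k\<in>{0..<n}. h k) = (\<Sum>k\<le>i. h k)"
  by (rule sum.mono_neutral_right) (use assms in auto)

lemma minv_eqI:
  assumes A: "A \<in> carrier_mat n n" and B: "B \<in> carrier_mat n n" and AB: "A * B = 1\<^sub>m n"
  shows "minv A = B"
  unfolding minv_def
proof (rule the_equality)
  show "B \<in> carrier_mat (dim_row A) (dim_row A) \<and> A * B = 1\<^sub>m (dim_row A) \<and> B * A = 1\<^sub>m (dim_row A)"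
    using A B AB mat_mult_left_right_inverse[OF A B AB] by auto
next
  fix C assume "C \<in> carrier_mat (dim_row A) (dim_row A) \<and> A * C = 1\<^sub>m (dim_row A) \<and> C * A = 1\<^sub>m (dim_row A)"
  hence C: "C \<in> carrier_mat n n" and CA: "C * A = 1\<^sub>m n" using A by auto
  have "C = C * (A * B)" using C AB by simp
  also have "\<dots> = (C * A) * B" using assoc_mult_mat[OF C A B] by simp
  also have "\<dots> = B" using CA B by simp
  finally show "C = B" .
qed

lemma trunc_carrier_mat [simp]: "trunc A n \<in> carrier_mat n n"
  by (simp add: trunc_def)

lemma dim_row_trunc [simp]: "dim_row (trunc A n) = n"
  and dim_col_trunc [simp]: "dim_col (trunc A n) = n"
  by (simp_all add: trunc_def)

lemma trunc_mult_trunc_carrier_mat [simp]: "trunc A n * trunc B n \<in> carrier_mat n n"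
  by (simp add: mult_carrier_mat[of _ n n])

lemma det_trunc_lower_triangular:
  assumes "\<And>i j. i < j \<Longrightarrow> j < n \<Longrightarrow> A i j = 0"
  shows "det (trunc A n) = (\<Prod>i<n. A i i)"
proof -
  have "det (trunc A n) = prod_list (diag_mat (trunc A n))"
    by (rule det_lower_triangular[of n]) (auto simp: trunc_def assms)
  also have "\<dots> = (\<Prod>i<n. A i i)"
    by (simp add: diag_mat_def trunc_def prod.distinct_set_conv_list[symmetric] atLeast0LessThan)
  finally show ?thesis .
qed

lemma det_trunc_upper_triangular:
  assumes "\<And>i j. j < i \<Longrightarrow> i < n \<Longrightarrow> A i j = 0"
  shows "det (trunc A n) = (\<Prod>i<n. A i i)"
proof -
  have "det (trunc A n) = prod_list (diag_mat (trunc A n))"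
    by (rule det_upper_triangular) (auto simp: trunc_def assms upper_triangular_def)
  also have "\<dots> = (\<Prod>i<n. A i i)"
    by (simp add: diag_mat_def trunc_def prod.distinct_set_conv_list[symmetric] atLeast0LessThan)
  finally show ?thesis .
qed

(* The linear forms Q^(l) and Qbar^(l) appear below as the sums \<Sum>k\<le>l. S l k * f k and
   \<Sum>k\<le>l. Sbinv k l * f k for an arbitrary vector f; the theorem takes f = xi_1(x), resp. xi_2(x). *)
locale lu_factorization =
  fixes g S Sb Sbinv :: "nat \<Rightarrow> nat \<Rightarrow> real"
  assumes S_diag: "S i i = 1"
    and S_above_diag: "i < j \<Longrightarrow> S i j = 0"
    and Sb_below_diag: "j < i \<Longrightarrow> Sb i j = 0"
    and S_mult_g: "(\<Sum>k\<le>i. S i k * g k j) = Sb i j"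
    and Sbinv_below_diag: "j < i \<Longrightarrow> Sbinv i j = 0"
    and Sb_mult_Sbinv: "(\<Sum>k\<le>j. Sb i k * Sbinv k j) = (if i = j then 1 else 0)"
begin

lemma S_row_sum: "i < n \<Longrightarrow> (\<Sum>k\<in>{0..<n}. S i k * h k) = (\<Sum>k\<le>i. S i k * h k)"
  by (rule sum_eq_sum_atMost_if_zero_above) (auto simp: S_above_diag)

lemma Sbinv_col_sum: "j < n \<Longrightarrow> (\<Sum>k\<in>{0..<n}. h k * Sbinv k j) = (\<Sum>k\<le>j. h k * Sbinv k j)"
  by (rule sum_eq_sum_atMost_if_zero_above) (auto simp: Sbinv_below_diag)

lemma trunc_S_mult_index:
  assumes "B \<in> carrier_mat n m" "i < n" "j < m"
  shows "(trunc S n * B) $$ (i, j) = (\<Sum>k\<le>i. S i k * B $$ (k, j))"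
  using assms by (simp add: trunc_def scalar_prod_def S_row_sum)

lemma mult_trunc_Sbinv_index:
  assumes "B \<in> carrier_mat m n" "i < m" "j < n"
  shows "(B * trunc Sbinv n) $$ (i, j) = (\<Sum>k\<le>j. B $$ (i, k) * Sbinv k j)"
  using assms by (simp add: trunc_def scalar_prod_def Sbinv_col_sum)

lemma Sb_diag_mult_Sbinv_diag: "Sb l l * Sbinv l l = 1"
  using Sb_mult_Sbinv[of l l] by (simp add: Sb_below_diag flip: lessThan_Suc_atMost)

lemma Sb_diag_nonzero: "Sb l l \<noteq> 0"
  using Sb_diag_mult_Sbinv_diag[of l] by auto

lemma trunc_S_mult_trunc_g: "trunc S n * trunc g n = trunc Sb n"
  by (rule eq_matI) (auto simp: trunc_def scalar_prod_def S_row_sum S_mult_g)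

lemma trunc_Sb_mult_trunc_Sbinv: "trunc Sb n * trunc Sbinv n = 1\<^sub>m n"
  by (rule eq_matI) (auto simp: trunc_def scalar_prod_def Sbinv_col_sum Sb_mult_Sbinv)

lemma det_trunc_S: "det (trunc S n) = 1"
  by (simp add: det_trunc_lower_triangular S_above_diag S_diag)

lemma det_trunc_g: "det (trunc g n) = (\<Prod>i<n. Sb i i)"
proof -
  have "det (trunc g n) = det (trunc S n * trunc g n)"
    by (simp add: det_mult[of _ n] det_trunc_S)
  thus ?thesis
    by (simp add: trunc_S_mult_trunc_g det_trunc_upper_triangular Sb_below_diag)
qed

lemma det_trunc_g_mult_det_trunc_Sbinv: "det (trunc g n) * det (trunc Sbinv n) = 1"
  by (simp add: det_trunc_g det_trunc_upper_triangular Sbinv_below_diag Sb_diag_mult_Sbinv_diag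
      flip: prod.distrib)

lemma det_trunc_g_nonzero: "det (trunc g n) \<noteq> 0"
  by (simp add: det_trunc_g Sb_diag_nonzero)

lemma trunc_g_mult_Sbinv_S: "trunc g n * (trunc Sbinv n * trunc S n) = 1\<^sub>m n"
proof -
  have "trunc S n * (trunc g n * trunc Sbinv n) = 1\<^sub>m n"
    using assoc_mult_mat[of "trunc S n" n n "trunc g n" n "trunc Sbinv n" n]
    by (simp add: trunc_S_mult_trunc_g trunc_Sb_mult_trunc_Sbinv)
  hence "(trunc g n * trunc Sbinv n) * trunc S n = 1\<^sub>m n"
    by (rule mat_mult_left_right_inverse[OF trunc_carrier_mat trunc_mult_trunc_carrier_mat])
  thus ?thesis
    using assoc_mult_mat[of "trunc g n" n n "trunc Sbinv n" n "trunc S n" n] by simp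
qed

lemma minv_trunc_g: "minv (trunc g n) = trunc Sbinv n * trunc S n"
  by (rule minv_eqI[OF trunc_carrier_mat trunc_mult_trunc_carrier_mat trunc_g_mult_Sbinv_S])

lemma minv_trunc_g_carrier_mat [simp]: "minv (trunc g n) \<in> carrier_mat n n"
  by (simp add: minv_trunc_g)

lemma trunc_g_mult_minv:
  assumes "v \<in> carrier_vec n"
  shows "mv (trunc g n) (mv (minv (trunc g n)) v) = v"
proof -
  have "mv (trunc g n) (mv (minv (trunc g n)) v) = mv (trunc g n * minv (trunc g n)) v"
    using assms by (simp add: assoc_mult_mat_vec[of _ n n _ n])
  thus ?thesis
    using assms by (simp add: minv_trunc_g trunc_g_mult_Sbinv_S)
qed

lemma minv_mult_trunc_g:
  assumes "v \<in> carrier_vec n"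
  shows "mv (minv (trunc g n)) (mv (trunc g n) v) = v"
proof -
  have "minv (trunc g n) * trunc g n = 1\<^sub>m n"
    unfolding minv_trunc_g
    by (rule mat_mult_left_right_inverse[OF trunc_carrier_mat _ trunc_g_mult_Sbinv_S]) simp
  moreover have "mv (minv (trunc g n)) (mv (trunc g n) v) = mv (minv (trunc g n) * trunc g n) v"
    using assms by (simp add: assoc_mult_mat_vec[of _ n n _ n])
  ultimately show ?thesis
    using assms by simp
qed

lemma minv_trunc_g_mult_vec:
  "mv (minv (trunc g n)) (vec n f) = mv (trunc Sbinv n) (vec n (\<lambda>i. \<Sum>k\<le>i. S i k * f k))"
proof -
  have "mv (trunc S n) (vec n f) = vec n (\<lambda>i. \<Sum>k\<le>i. S i k * f k)"
    by (rule eq_vecI) (auto simp: trunc_def scalar_prod_def S_row_sum)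
  thus ?thesis
    by (simp add: minv_trunc_g assoc_mult_mat_vec[of _ n n _ n])
qed

lemma Q_eq_Sb_diag_mult_last_entry:
  "(\<Sum>k\<le>l. S l k * f k)
     = Sb l l * sp (unit_vec (l+1) l) (mv (minv (trunc g (l+1))) (vec (l+1) f))"
proof -
  have "sp (unit_vec (l+1) l) (mv (minv (trunc g (l+1))) (vec (l+1) f))
      = (mv (minv (trunc g (l+1))) (vec (l+1) f)) $ l"
    by (rule scalar_prod_left_unit) (auto intro: mult_mat_vec_carrier[OF minv_trunc_g_carrier_mat])
  also have "\<dots> = (\<Sum>j<l+1. Sbinv l j * (\<Sum>k\<le>j. S j k * f k))"
    unfolding minv_trunc_g_mult_vec by (simp add: trunc_def scalar_prod_def atLeast0LessThan)
  also have "\<dots> = Sbinv l l * (\<Sum>k\<le>l. S l k * f k)"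
    by (simp add: Sbinv_below_diag)
  finally show ?thesis
    by (simp add: Sb_diag_mult_Sbinv_diag flip: mult.assoc)
qed

lemma g_below_diag: "j < l \<Longrightarrow> g l j = - (\<Sum>k<l. S l k * g k j)"
  using S_mult_g[of l j] by (simp add: Sb_below_diag S_diag flip: lessThan_Suc_atMost)

lemma Q_eq_Schur_complement:
  "(\<Sum>k\<le>l. S l k * f k) = f l - sp (vec l (g l)) (mv (minv (trunc g l)) (vec l f))"
proof -
  let ?s = "vec l (\<lambda>k. - S l k)"
  have "vec l (g l) = mv (transpose_mat (trunc g l)) ?s"
    by (rule eq_vecI)
      (auto simp: trunc_def scalar_prod_def g_below_diag sum_negf mult.commute atLeast0LessThan)
  hence "sp (vec l (g l)) (mv (minv (trunc g l)) (vec l f))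
      = sp ?s (mv (trunc g l) (mv (minv (trunc g l)) (vec l f)))"
    by (simp add: transpose_vec_mult_scalar[OF trunc_carrier_mat
          mult_mat_vec_carrier[OF minv_trunc_g_carrier_mat]])
  also have "\<dots> = - (\<Sum>k<l. S l k * f k)"
    by (simp add: trunc_g_mult_minv scalar_prod_def sum_negf atLeast0LessThan)
  finally show ?thesis
    by (simp add: S_diag flip: lessThan_Suc_atMost)
qed

lemma Q_eq_det_ratio:
  "(\<Sum>k\<le>l. S l k * f k)
     = det (mat (l+1) (l+1) (\<lambda>(i,j). if j < l then g i j else f i)) / det (trunc g l)"
proof -
  let ?A = "trunc (\<lambda>i j. if j < l then g i j else f i) (l+1)"
  let ?B = "trunc (\<lambda>i j. if j < l then Sb i j else (\<Sum>k\<le>i. S i k * f k)) (l+1)"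
  have LA: "trunc S (l+1) * ?A = ?B"
  proof (rule eq_matI)
    fix i j assume ij: "i < dim_row ?B" "j < dim_col ?B"
    hence "(trunc S (l+1) * ?A) $$ (i, j) = (\<Sum>k\<le>i. S i k * ?A $$ (k, j))"
      by (intro trunc_S_mult_index) simp_all
    also have "\<dots> = (\<Sum>k\<le>i. S i k * (if j < l then g k j else f k))"
      using ij by (intro sum.cong) (simp_all add: trunc_def)
    finally show "(trunc S (l+1) * ?A) $$ (i, j) = ?B $$ (i, j)"
      using ij by (simp add: trunc_def S_mult_g)
  qed simp_all
  have "det ?A = det ?B"
    using det_mult[OF trunc_carrier_mat trunc_carrier_mat, of S "l+1" "\<lambda>i j. if j < l then g i j else f i"]
    unfolding LA by (simp add: det_trunc_S)
  also have "\<dots> = det (trunc g l) * (\<Sum>k\<le>l. S l k * f k)"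
    by (simp add: det_trunc_upper_triangular Sb_below_diag det_trunc_g)
  finally show ?thesis
    using det_trunc_g_nonzero[of l] by (simp add: trunc_def)
qed

lemma minv_trunc_g_mult_unit_vec:
  "mv (minv (trunc g (l+1))) (unit_vec (l+1) l) = vec (l+1) (\<lambda>k. Sbinv k l)"
proof -
  have "mv (trunc S (l+1)) (unit_vec (l+1) l) = unit_vec (l+1) l"
    by (rule eq_vecI) (auto simp: trunc_def S_diag S_above_diag)
  moreover have "mv (trunc Sbinv (l+1)) (unit_vec (l+1) l) = vec (l+1) (\<lambda>k. Sbinv k l)"
    by (rule eq_vecI) (auto simp: trunc_def)
  ultimately show ?thesis
    by (simp add: minv_trunc_g assoc_mult_mat_vec[of _ "l+1" "l+1" _ "l+1"])
qed

lemma Qbar_eq_last_column: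
  "(\<Sum>k\<le>l. Sbinv k l * f k) = sp (vec (l+1) f) (mv (minv (trunc g (l+1))) (unit_vec (l+1) l))"
  unfolding minv_trunc_g_mult_unit_vec by (simp add: scalar_prod_def atLeast0LessThan lessThan_Suc_atMost
      mult.commute)

lemma g_mult_Sbinv_column:
  assumes "i < l"
  shows "(\<Sum>k\<le>l. g i k * Sbinv k l) = 0"
proof -
  have "mv (trunc g (l+1)) (vec (l+1) (\<lambda>k. Sbinv k l)) = unit_vec (l+1) l"
    using trunc_g_mult_minv[of "unit_vec (l+1) l" "l+1"]
    unfolding minv_trunc_g_mult_unit_vec by simp
  hence "mv (trunc g (l+1)) (vec (l+1) (\<lambda>k. Sbinv k l)) $ i = 0"
    using \<open>i < l\<close> by simp
  thus ?thesis
    using \<open>i < l\<close>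
    by (simp add: trunc_def scalar_prod_def atLeast0LessThan flip: lessThan_Suc_atMost)
qed

lemma Qbar_eq_Schur_complement:
  "(\<Sum>k\<le>l. Sbinv k l * f k)
     = inverse (Sb l l) * (f l - sp (vec l f) (mv (minv (trunc g l)) (vec l (\<lambda>i. g i l))))"
proof -
  let ?w = "vec l (\<lambda>k. - Sb l l * Sbinv k l)"
  have "vec l (\<lambda>i. g i l) = mv (trunc g l) ?w"
  proof (rule eq_vecI)
    fix i assume "i < dim_vec (mv (trunc g l) ?w)"
    hence "i < l" by (simp add: trunc_def)
    have "(\<Sum>k<l. g i k * Sbinv k l) = - g i l * Sbinv l l"
      using g_mult_Sbinv_column[OF \<open>i < l\<close>] by (simp flip: lessThan_Suc_atMost)
    have "(\<Sum>k<l. g i k * (- Sb l l * Sbinv k l)) = - Sb l l * (\<Sum>k<l. g i k * Sbinv k l)"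
      by (simp add: sum_distrib_left algebra_simps)
    also have "\<dots> = g i l"
      using \<open>(\<Sum>k<l. g i k * Sbinv k l) = - g i l * Sbinv l l\<close> Sb_diag_mult_Sbinv_diag[of l]
      by (simp add: algebra_simps)
    finally have "(\<Sum>k<l. g i k * (- Sb l l * Sbinv k l)) = g i l" .
    thus "vec l (\<lambda>i. g i l) $ i = mv (trunc g l) ?w $ i"
      using \<open>i < l\<close> by (simp add: trunc_def scalar_prod_def atLeast0LessThan)
  qed (simp add: trunc_def)
  hence "sp (vec l f) (mv (minv (trunc g l)) (vec l (\<lambda>i. g i l))) = sp (vec l f) ?w"
    by (simp add: minv_mult_trunc_g)
  also have "\<dots> = - Sb l l * (\<Sum>k<l. Sbinv k l * f k)"
    by (simp add: scalar_prod_def atLeast0LessThan sum_distrib_left algebra_simps)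
  finally show ?thesis
    using Sb_diag_mult_Sbinv_diag[of l] Sb_diag_nonzero[of l]
    by (simp add: field_simps flip: lessThan_Suc_atMost)
qed

lemma Qbar_eq_det_ratio:
  "(\<Sum>k\<le>l. Sbinv k l * f k)
     = det (mat (l+1) (l+1) (\<lambda>(i,j). if i < l then g i j else f j)) / det (trunc g (l+1))"
proof -
  let ?L = "trunc (\<lambda>i j. if i < l then S i j else of_bool (i = j)) (l+1)"
  let ?B = "trunc (\<lambda>i j. if i < l then g i j else f j) (l+1)"
  let ?C = "trunc (\<lambda>i j. if i < l then Sb i j else f j) (l+1)"
  let ?D = "trunc (\<lambda>i j. if i < l then of_bool (i = j) else (\<Sum>k\<le>j. f k * Sbinv k j)) (l+1)"
  have LB: "?L * ?B = ?C"
  proof (rule eq_matI)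
    fix i j assume ij: "i < dim_row ?C" "j < dim_col ?C"
    show "(?L * ?B) $$ (i, j) = ?C $$ (i, j)"
    proof (cases "i < l")
      case True
      with ij have "(?L * ?B) $$ (i, j) = (trunc S (l+1) * ?B) $$ (i, j)"
        by (simp add: trunc_def)
      also have "\<dots> = (\<Sum>k\<le>i. S i k * ?B $$ (k, j))"
        using ij by (intro trunc_S_mult_index) simp_all
      also have "\<dots> = (\<Sum>k\<le>i. S i k * g k j)"
        using ij True by (intro sum.cong) (simp_all add: trunc_def)
      finally show ?thesis
        using ij True by (simp add: S_mult_g trunc_def)
    next
      case False
      with ij show ?thesis by (simp add: trunc_def scalar_prod_def)
    qed
  qed simp_all
  have CV: "?C * trunc Sbinv (l+1) = ?D"
  proof (rule eq_matI)
    fix i j assume ij: "i < dim_row ?D" "j < dim_col ?D"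
    hence "(?C * trunc Sbinv (l+1)) $$ (i, j) = (\<Sum>k\<le>j. ?C $$ (i, k) * Sbinv k j)"
      by (intro mult_trunc_Sbinv_index) simp_all
    also have "\<dots> = (\<Sum>k\<le>j. (if i < l then Sb i k else f k) * Sbinv k j)"
      using ij by (intro sum.cong) (simp_all add: trunc_def)
    finally show "(?C * trunc Sbinv (l+1)) $$ (i, j) = ?D $$ (i, j)"
      using ij by (simp add: Sb_mult_Sbinv trunc_def)
  qed simp_all
  have "det ?L = 1"
    by (simp add: det_trunc_lower_triangular S_above_diag S_diag)
  hence "det ?B = det ?C"
    using det_mult[OF trunc_carrier_mat trunc_carrier_mat,
        of "\<lambda>i j. if i < l then S i j else of_bool (i = j)" "l+1" "\<lambda>i j. if i < l then g i j else f j"]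
    unfolding LB by simp
  also have "\<dots> = det ?C * det (trunc Sbinv (l+1)) * det (trunc g (l+1))"
    using det_trunc_g_mult_det_trunc_Sbinv[of "l+1"] by (simp add: algebra_simps)
  also have "det ?C * det (trunc Sbinv (l+1)) = det ?D"
    using det_mult[OF trunc_carrier_mat trunc_carrier_mat,
        of "\<lambda>i j. if i < l then Sb i j else f j" "l+1" Sbinv]
    unfolding CV by simp
  also have "det ?D = (\<Sum>k\<le>l. Sbinv k l * f k)"
    by (simp add: det_trunc_lower_triangular mult.commute)
  finally show ?thesis
    using det_trunc_g_nonzero[of "l+1"] by (simp add: trunc_def)
qed

end

theorem proposition2p7:
  fixes M :: "real measure" and \<sigma> :: real and \<Delta> :: "real set"
    and n1 n2 :: "nat list"
    and w1 w2 :: "nat \<Rightarrow> real \<Rightarrow> real"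
    and g S Sb Sbinv :: "nat \<Rightarrow> nat \<Rightarrow> real"
    and Q Qb :: "nat \<Rightarrow> real \<Rightarrow> real"
  assumes interval: "is_interval \<Delta>"
    and M_borel: "sets M = sets borel"
    and M_finite: "finite_measure M"
    and M_on_\<Delta>: "emeasure M (UNIV - \<Delta>) = 0"
    and M_supp: "infinite (msupport M)"
    and sign: "\<sigma> = 1 \<or> \<sigma> = -1"
    and comp1: "composition n1" and comp2: "composition n2"
    and w1_int: "\<And>a. a < length n1 \<Longrightarrow> integrable M (w1 a)"
    and w2_int: "\<And>b. b < length n2 \<Longrightarrow> integrable M (w2 b)"
    and w1_sign: "\<And>a. a < length n1 \<Longrightarrow>
                    (\<forall>x\<in>\<Delta>. w1 a x \<ge> 0) \<or> (\<forall>x\<in>\<Delta>. w1 a x \<le> 0)"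
    and w2_sign: "\<And>b. b < length n2 \<Longrightarrow>
                    (\<forall>x\<in>\<Delta>. w2 b x \<ge> 0) \<or> (\<forall>x\<in>\<Delta>. w2 b x \<le> 0)"
    and perfect: "perfect M (length n1) w1 (length n2) w2"
    and g_def: "\<And>i j. g i j = \<sigma> * (\<integral>x. xi n1 w1 i x * xi n2 w2 j x \<partial>M)"
    and S_unit: "\<And>i. S i i = 1"
    and S_lower: "\<And>i j. i < j \<Longrightarrow> S i j = 0"
    and Sb_upper: "\<And>i j. j < i \<Longrightarrow> Sb i j = 0"
    and Sb_diag: "\<And>i. Sb i i \<noteq> 0"
    and LU: "\<And>i j. (\<Sum>k\<le>i. S i k * g k j) = Sb i j"
    and Sbinv_upper: "\<And>i j. j < i \<Longrightarrow> Sbinv i j = 0"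
    and Sbinv_right: "\<And>i j. (\<Sum>k\<le>j. Sb i k * Sbinv k j) = (if i = j then 1 else 0)"
    and Sbinv_left: "\<And>i j. (\<Sum>k\<le>j. Sbinv i k * Sb k j) = (if i = j then 1 else 0)"
    and Q_def: "\<And>l x. Q l x = (\<Sum>k\<le>l. S l k * xi n1 w1 k x)"
    and Qb_def: "\<And>l x. Qb l x = (\<Sum>k\<le>l. Sbinv k l * xi n2 w2 k x)"
  shows "(\<forall>l\<ge>1. \<forall>x.
            Q l x = xi n1 w1 l x
                    - sp (Matrix.vec l (\<lambda>j. g l j)) (mv (minv (trunc g l)) (Matrix.vec l (\<lambda>i. xi n1 w1 i x)))
          \<and> Q l x = Sb l l * sp (unit_vec (l+1) l)
                    (mv (minv (trunc g (l+1))) (Matrix.vec (l+1) (\<lambda>i. xi n1 w1 i x)))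
          \<and> Q l x = det (mat (l+1) (l+1) (\<lambda>(i,j). if j < l then g i j else xi n1 w1 i x))
                    / det (trunc g l))
       \<and> (\<forall>l. \<forall>x.
            Qb l x = inverse (Sb l l) * (xi n2 w2 l x
                    - sp (Matrix.vec l (\<lambda>i. xi n2 w2 i x)) (mv (minv (trunc g l)) (Matrix.vec l (\<lambda>i. g i l))))
          \<and> Qb l x = sp (Matrix.vec (l+1) (\<lambda>i. xi n2 w2 i x))
                    (mv (minv (trunc g (l+1))) (unit_vec (l+1) l))
          \<and> Qb l x = det (mat (l+1) (l+1) (\<lambda>(i,j). if i < l then g i j else xi n2 w2 j x))
                    / det (trunc g (l+1)))"
proof -
  (* The measure and perfectness hypotheses only guarantee that the factorisation exists. *)
  interpret lu_factorization g S Sb Sbinv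
    by unfold_locales (use S_unit S_lower Sb_upper LU Sbinv_upper Sbinv_right in auto)
  show ?thesis
    unfolding Q_def Qb_def
    by (intro conjI allI impI Q_eq_Schur_complement Q_eq_Sb_diag_mult_last_entry Q_eq_det_ratio
        Qbar_eq_Schur_complement Qbar_eq_last_column Qbar_eq_det_ratio)
qed

end
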